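(* Let $\vec{\alpha}=\langle\alpha_s:s\in[\mathbb{N}]^{<\infty}\rangle$ be a sequence of nonstandard hypernatural numbers. The collection of $\vec{\alpha}$-Ramsey null subsets of $[\mathbb{N}]^\infty$ is a $\sigma$-ideal: it contains $\emptyset$, is closed under subsets, and is closed under countable unions.
   Context: Setting (Alpha-Theory of Benci–Di Nasso): ZFC together with a new symbol $\alpha$ satisfying: ($\alpha$1) every sequence $\varphi=\langle\varphi_i:i\in\mathbb{N}\rangle$ has a unique ideal value $\varphi[\alpha]$; ($\alpha$2) if $\varphi[\alpha]=\psi[\alpha]$ and $f\circ\varphi$, $f\circ\psi$ make sense then $(f\circ\varphi)[\alpha]=(f\circ\psi)[\alpha]$; ($\alpha$3) constant real sequences $r$ have ideal value $r$, and $\langle i\rangle$ has ideal value $\alpha\notin\mathbb{N}$; ($\alpha$4) if $\vartheta_i=\{\varphi_i,\psi_i\}$ then $\vartheta[\alpha]=\{\varphi[\alpha],\psi[\alpha]\}$; ($\alpha$5) the constant sequence $\emptyset$ has ideal value $\emptyset$, and for nonempty $\psi_i$, $\psi[\alpha]=\{\vartheta[\alpha]:\vartheta_i\in\psi_i\ \forall i\}$. ${}^*A$ is the ideal value of the constant sequence $A$; elements of ${}^*\mathbb{N}\setminus\mathbb{N}$ are nonstandard hypernatural numbers. For finite $s$, $s\sqsubseteq X$ means $s=\{j\in X:j\le i\}$ for some $i$. A tree on $\mathbb{N}$ is a nonempty $T\subseteq[\mathbb{N}]^{<\infty}$ closed under $\sqsubseteq$-initial segments; $[T]=\{X\in[\mathbb{N}]^\infty:$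 every finite $s\sqsubseteq X$ is in $T\}$; stem $st(T)$ = $\sqsubseteq$-maximal $s\in T$ comparable with all elements of $T$; $T/s=\{t\in T:s\sqsubseteq t\}$. An $\vec{\alpha}$-tree is a tree $T$ with a stem, $T/st(T)\neq\emptyset$, and $s\cup\{\alpha_s\}\in{}^*T$ for all $s\in T/st(T)$. $\mathcal{X}\subseteq[\mathbb{N}]^\infty$ is $\vec{\alpha}$-Ramsey null if for every $\vec{\alpha}$-tree $T$ there is an $\vec{\alpha}$-tree $S\subseteq T$ with $st(S)=st(T)$ and $[S]\cap\mathcal{X}=\emptyset$. *)

theory Defs
  imports Main
begin

text \<open>Ultrapower model of Alpha-Theory: the ideal value map corresponds to a
nonprincipal ultrafilter U on nat (U = {A. alpha in *A}); every hypernatural is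
the ideal value of some sequence g :: nat => nat, and transfer statements about
ideal values hold iff they hold for U-almost every index.\<close>

definition ultrafilter_on_nat :: "nat set set \<Rightarrow> bool" where
  "ultrafilter_on_nat U \<longleftrightarrow>
     UNIV \<in> U \<and> {} \<notin> U \<and>
     (\<forall>A B. A \<in> U \<longrightarrow> A \<subseteq> B \<longrightarrow> B \<in> U) \<and>
     (\<forall>A B. A \<in> U \<longrightarrow> B \<in> U \<longrightarrow> A \<inter> B \<in> U) \<and>
     (\<forall>A. A \<in> U \<or> - A \<in> U)"

definition nonprincipal :: "nat set set \<Rightarrow> bool" where
  "nonprincipal U \<longleftrightarrow> (\<forall>A. finite A \<longrightarrow> A \<notin> U)"

text \<open>The hypernatural represented by g is nonstandard iff it differs from every
standard n, i.e. g i \<noteq> n for U-almost all i.\<close>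
definition nonstandard_rep :: "nat set set \<Rightarrow> (nat \<Rightarrow> nat) \<Rightarrow> bool" where
  "nonstandard_rep U g \<longleftrightarrow> (\<forall>n. {i. g i \<noteq> n} \<in> U)"

definition init_seg :: "nat set \<Rightarrow> nat set \<Rightarrow> bool" where
  "init_seg s X \<longleftrightarrow> finite s \<and> (\<exists>n. s = {j \<in> X. j < n})"

definition is_tree :: "nat set set \<Rightarrow> bool" where
  "is_tree T \<longleftrightarrow> T \<noteq> {} \<and> (\<forall>t\<in>T. finite t) \<and>
     (\<forall>t\<in>T. \<forall>s. init_seg s t \<longrightarrow> s \<in> T)"

definition branches :: "nat set set \<Rightarrow> nat set set" where
  "branches T = {X. infinite X \<and> (\<forall>s. init_seg s X \<longrightarrow> s \<in> T)}"

definition comparable :: "nat set \<Rightarrow> nat set \<Rightarrow> bool" where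
  "comparable s t \<longleftrightarrow> init_seg s t \<or> init_seg t s"

definition is_stem :: "nat set set \<Rightarrow> nat set \<Rightarrow> bool" where
  "is_stem T s \<longleftrightarrow> s \<in> T \<and> (\<forall>t\<in>T. comparable s t) \<and>
     (\<forall>s'\<in>T. (\<forall>t\<in>T. comparable s' t) \<longrightarrow> init_seg s s' \<longrightarrow> s' = s)"

definition stem :: "nat set set \<Rightarrow> nat set" where
  "stem T = (THE s. is_stem T s)"

definition tree_above :: "nat set set \<Rightarrow> nat set \<Rightarrow> nat set set" where
  "tree_above T s = {t \<in> T. init_seg s t}"

text \<open>alpha-tree, where alpha_s is the ideal value of the sequence a s:
  s \<union> {alpha_s} \<in> *T  iff  {i. s \<union> {a s i} \<in> T} \<in> U.\<close>
definition alpha_tree :: "nat set set \<Rightarrow> (nat set \<Rightarrow> nat \<Rightarrow> nat) \<Rightarrow> nat set set \<Rightarrow> bool" where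
  "alpha_tree U a T \<longleftrightarrow> is_tree T \<and> (\<exists>s. is_stem T s) \<and>
     tree_above T (stem T) \<noteq> {} \<and>
     (\<forall>s\<in>tree_above T (stem T). {i. insert (a s i) s \<in> T} \<in> U)"

definition alpha_ramsey_null ::
  "nat set set \<Rightarrow> (nat set \<Rightarrow> nat \<Rightarrow> nat) \<Rightarrow> nat set set \<Rightarrow> bool" where
  "alpha_ramsey_null U a \<X> \<longleftrightarrow> (\<forall>X\<in>\<X>. infinite X) \<and>
     (\<forall>T. alpha_tree U a T \<longrightarrow>
        (\<exists>S. alpha_tree U a S \<and> S \<subseteq> T \<and> stem S = stem T \<and>
             branches S \<inter> \<X> = {}))"

end

theory Submission
  imports Defs
begin

text \<open>For countable unions one
fuses: given an \<alpha>-tree T with stem r and null sets X(0), X(1), ..., attach to every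
node u above r with |u| = |r| + n an \<alpha>-tree T(u) with stem u, pruned inside the tree
attached to the parent of u so that its branches avoid X(n). The fusion tree consists of
the initial segments of r and the nodes reached from r by one-point extensions that stay
inside the tree attached to the current node. Since every \<alpha>(u) is nonstandard, each
node has U-many such extensions, so the fusion tree is again an \<alpha>-tree with stem r;
each of its branches passes through a node u of level n and from then on stays in T(u),
hence misses X(n).\<close>

lemma init_seg_iff:
  "init_seg s t \<longleftrightarrow> finite s \<and> s \<subseteq> t \<and> (\<forall>x\<in>s. \<forall>y\<in>t. y < x \<longrightarrow> y \<in> s)"
proof
  assume "init_seg s t"
  then show "finite s \<and> s \<subseteq> t \<and> (\<forall>x\<in>s. \<forall>y\<in>t. y < x \<longrightarrow> y \<in> s)"
    unfolding init_seg_def by auto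
next
  assume s: "finite s \<and> s \<subseteq> t \<and> (\<forall>x\<in>s. \<forall>y\<in>t. y < x \<longrightarrow> y \<in> s)"
  have "s = {j\<in>t. j < Suc (Max s)}" if "s \<noteq> {}"
  proof
    show "s \<subseteq> {j\<in>t. j < Suc (Max s)}"
      using s by (auto simp: less_Suc_eq_le)
    have "Max s \<in> s"
      using s that by simp
    then show "{j\<in>t. j < Suc (Max s)} \<subseteq> s"
      using s by (auto simp: less_Suc_eq)
  qed
  then show "init_seg s t"
    using s unfolding init_seg_def by (cases "s = {}") auto
qed

lemma init_seg_finite: "init_seg s t \<Longrightarrow> finite s"
  unfolding init_seg_iff by blast

lemma init_seg_subset: "init_seg s t \<Longrightarrow> s \<subseteq> t"
  unfolding init_seg_iff by blast

lemma init_seg_refl: "finite s \<Longrightarrow> init_seg s s"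
  unfolding init_seg_iff by blast

lemma init_seg_trans: "init_seg s t \<Longrightarrow> init_seg t u \<Longrightarrow> init_seg s u"
  unfolding init_seg_iff by blast

lemma init_seg_antisym: "init_seg s t \<Longrightarrow> init_seg t s \<Longrightarrow> s = t"
  using init_seg_subset by blast

lemma init_seg_comparable:
  assumes "init_seg s X" and "init_seg t X"
  shows "comparable s t"
proof -
  obtain n m where "s = {j\<in>X. j < n}" "t = {j\<in>X. j < m}" "finite s" "finite t"
    using assms unfolding init_seg_def by blast
  then have "s = {j\<in>t. j < n} \<or> t = {j\<in>s. j < m}"
    by (cases "n \<le> m") auto
  then show ?thesis
    using \<open>finite s\<close> \<open>finite t\<close> unfolding comparable_def init_seg_def by blast
qed

lemma init_seg_insert_iff:
  assumes "finite u" and "\<forall>x\<in>u. x < m"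
  shows "init_seg v (insert m u) \<longleftrightarrow> v = insert m u \<or> init_seg v u"
proof
  assume v: "init_seg v (insert m u)"
  show "v = insert m u \<or> init_seg v u"
  proof (cases "m \<in> v")
    case True
    then have "v = insert m u"
      using v assms unfolding init_seg_iff by blast
    then show ?thesis ..
  next
    case False
    then show ?thesis
      using v assms unfolding init_seg_iff by blast
  qed
next
  assume "v = insert m u \<or> init_seg v u"
  then show "init_seg v (insert m u)"
  proof
    assume "init_seg v u"
    then have "v \<subseteq> u"
      by (rule init_seg_subset)
    then show ?thesis
      using \<open>init_seg v u\<close> assms unfolding init_seg_iff by fastforce
  qed (use assms init_seg_refl in simp)
qed

lemma init_seg_insert: "finite u \<Longrightarrow> \<forall>x\<in>u. x < m \<Longrightarrow> init_seg u (insert m u)"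
  using init_seg_insert_iff init_seg_refl by blast

lemma ex_init_seg_card: "infinite X \<Longrightarrow> \<exists>u. init_seg u X \<and> card u = n"
proof (induction n)
  case 0
  then show ?case
    using init_seg_refl[of "{}"] init_seg_iff by fastforce
next
  case (Suc n)
  then obtain u where u: "init_seg u X" "card u = n"
    by blast
  have "finite u"
    using u init_seg_finite by blast
  then have "X - u \<noteq> {}"
    using Suc.prems finite_subset by auto
  define y where "y = (LEAST z. z \<in> X - u)"
  have y: "y \<in> X - u"
    unfolding y_def using \<open>X - u \<noteq> {}\<close> by (metis LeastI ex_in_conv)
  have y_least: "y \<le> z" if "z \<in> X - u" for z
    unfolding y_def using that by (rule Least_le)
  have "init_seg (insert y u) X"
    unfolding init_seg_iff
  proof (intro conjI ballI impI)
    show "finite (insert y u)" "insert y u \<subseteq> X"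
      using \<open>finite u\<close> y u init_seg_subset by auto
    fix x z assume "x \<in> insert y u" "z \<in> X" "z < x"
    then show "z \<in> insert y u"
      using y_least u unfolding init_seg_iff by (metis Diff_iff insertE insertI2 leD)
  qed
  moreover have "card (insert y u) = Suc n"
    using y \<open>finite u\<close> u by simp
  ultimately show ?case
    by blast
qed

lemma ultrafilter_on_nat_Int: "ultrafilter_on_nat U \<Longrightarrow> A \<in> U \<Longrightarrow> B \<in> U \<Longrightarrow> A \<inter> B \<in> U"
  unfolding ultrafilter_on_nat_def by blast

lemma ultrafilter_on_nat_mono: "ultrafilter_on_nat U \<Longrightarrow> A \<in> U \<Longrightarrow> A \<subseteq> B \<Longrightarrow> B \<in> U"
  unfolding ultrafilter_on_nat_def by blast

lemma ultrafilter_on_nat_nonempty: "ultrafilter_on_nat U \<Longrightarrow> A \<in> U \<Longrightarrow> A \<noteq> {}"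
  unfolding ultrafilter_on_nat_def by blast

lemma stem_eqI: "is_stem A r \<Longrightarrow> stem A = r"
  unfolding stem_def
proof (rule the_equality)
  fix s assume r: "is_stem A r" and s: "is_stem A s"
  have "comparable r s"
    using r s unfolding is_stem_def by blast
  then show "s = r"
    using r s unfolding is_stem_def comparable_def by metis
qed

lemma is_stemI:
  assumes "r \<in> A" and "\<forall>t\<in>A. comparable r t"
    and "m1 \<noteq> m2" "insert m1 r \<in> A" "insert m2 r \<in> A" "\<forall>x\<in>r. x < m1" "\<forall>x\<in>r. x < m2"
  shows "is_stem A r"
  unfolding is_stem_def
proof (intro conjI ballI impI assms(1))
  fix t assume "t \<in> A"
  then show "comparable r t"
    using assms(2) by blast
next
  fix s assume "s \<in> A" and s: "\<forall>t\<in>A. comparable s t" and "init_seg r s"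
  show "s = r"
  proof (rule ccontr)
    assume "s \<noteq> r"
    have "finite r"
      using \<open>init_seg r s\<close> by (rule init_seg_finite)
    have extension_in_s: "m \<in> s" if "insert m r \<in> A" "\<forall>x\<in>r. x < m" for m
    proof -
      have "init_seg s (insert m r) \<or> init_seg (insert m r) s"
        using s that(1) unfolding comparable_def by blast
      moreover have "\<not> init_seg s r"
        using init_seg_antisym \<open>init_seg r s\<close> \<open>s \<noteq> r\<close> by blast
      ultimately have "s = insert m r \<or> insert m r \<subseteq> s"
        using init_seg_insert_iff[OF \<open>finite r\<close> that(2)] init_seg_subset by blast
      then show ?thesis
        by blast
    qed
    have no_smaller: False
      if "m < m'" "m \<in> s" "insert m' r \<in> A" "\<forall>x\<in>r. x < m" for m m'
    proof -
      have "init_seg s (insert m' r) \<or> init_seg (insert m' r) s"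
        using s that(3) unfolding comparable_def by blast
      then have "m \<in> insert m' r"
        using that(1,2) unfolding init_seg_iff by blast
      then show False
        using that(1,4) by auto
    qed
    show False
    proof (cases "m1 < m2")
      case True
      then show False
        using no_smaller extension_in_s assms(4-7) by blast
    next
      case False
      then have "m2 < m1"
        using assms(3) by simp
      then show False
        using no_smaller extension_in_s assms(4-7) by blast
    qed
  qed
qed

lemma is_tree_closed: "is_tree A \<Longrightarrow> t \<in> A \<Longrightarrow> init_seg s t \<Longrightarrow> s \<in> A"
  unfolding is_tree_def by blast

lemma alpha_tree_is_tree: "alpha_tree U a A \<Longrightarrow> is_tree A"
  unfolding alpha_tree_def by simp

lemma alpha_tree_is_stem: "alpha_tree U a A \<Longrightarrow> is_stem A (stem A)"
  unfolding alpha_tree_def using stem_eqI by blast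

lemma stem_in_tree_above: "alpha_tree U a A \<Longrightarrow> stem A \<in> tree_above A (stem A)"
  using alpha_tree_is_stem[of U a A] init_seg_refl
  unfolding alpha_tree_def is_tree_def is_stem_def tree_above_def by blast

lemma alpha_ramsey_nullD:
  assumes "alpha_ramsey_null U a \<X>" and "alpha_tree U a T"
  shows "\<exists>S. alpha_tree U a S \<and> S \<subseteq> T \<and> stem S = stem T \<and> branches S \<inter> \<X> = {}"
  using assms unfolding alpha_ramsey_null_def by simp

lemma alpha_ramsey_null_subset:
  assumes "alpha_ramsey_null U a \<X>" and "\<Y> \<subseteq> \<X>"
  shows "alpha_ramsey_null U a \<Y>"
  using assms unfolding alpha_ramsey_null_def by (meson disjoint_iff subsetD)

definition subtree_through :: "nat set set \<Rightarrow> nat set \<Rightarrow> nat set set" where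
  "subtree_through A t = {u\<in>A. comparable u t}"

lemma is_tree_subtree_through:
  assumes "is_tree A" and "t \<in> A"
  shows "is_tree (subtree_through A t)"
  unfolding is_tree_def
proof (intro conjI ballI allI impI)
  have "finite t"
    using assms unfolding is_tree_def by blast
  then show "subtree_through A t \<noteq> {}"
    using assms(2) init_seg_refl unfolding subtree_through_def comparable_def by blast
next
  fix u assume "u \<in> subtree_through A t"
  then show "finite u"
    using assms(1) unfolding subtree_through_def is_tree_def by blast
next
  fix u s assume u: "u \<in> subtree_through A t" and "init_seg s u"
  then have "comparable s t"
    using init_seg_trans init_seg_comparable unfolding subtree_through_def comparable_def by blast
  then show "s \<in> subtree_through A t"
    using u \<open>init_seg s u\<close> assms(1) unfolding subtree_through_def is_tree_def by blast
qed

locale alpha_sequence =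
  fixes U :: "nat set set" and a :: "nat set \<Rightarrow> nat \<Rightarrow> nat"
  assumes ultrafilter: "ultrafilter_on_nat U"
    and nonstandard: "\<And>s. finite s \<Longrightarrow> nonstandard_rep U (a s)"
begin

lemma eventually_greater: "finite s \<Longrightarrow> {i. b < a s i} \<in> U"
proof (induction b)
  case 0
  then have "{i. a s i \<noteq> 0} \<in> U"
    using nonstandard unfolding nonstandard_rep_def by blast
  then show ?case
    by simp
next
  case (Suc b)
  then have "{i. b < a s i} \<inter> {i. a s i \<noteq> Suc b} \<in> U"
    using nonstandard ultrafilter_on_nat_Int[OF ultrafilter] unfolding nonstandard_rep_def by blast
  moreover have "{i. b < a s i} \<inter> {i. a s i \<noteq> Suc b} = {i. Suc b < a s i}"
    by auto
  ultimately show ?case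
    by simp
qed

lemma eventually_above:
  assumes "finite s"
  shows "{i. \<forall>x\<in>s. x < a s i} \<in> U"
proof (rule ultrafilter_on_nat_mono[OF ultrafilter eventually_greater[OF assms]])
  show "{i. \<Sum>s < a s i} \<subseteq> {i. \<forall>x\<in>s. x < a s i}"
    using member_le_sum[of _ s id] assms by (auto intro: le_less_trans)
qed

lemma eventually_extension_mono:
  assumes "finite s" and "{i. insert (a s i) s \<in> A} \<in> U"
    and "\<And>m. insert m s \<in> A \<Longrightarrow> \<forall>x\<in>s. x < m \<Longrightarrow> insert m s \<in> B"
  shows "{i. insert (a s i) s \<in> B} \<in> U"
proof -
  have "{i. insert (a s i) s \<in> A} \<inter> {i. \<forall>x\<in>s. x < a s i} \<in> U"
    using assms(1,2) eventually_above ultrafilter_on_nat_Int[OF ultrafilter] by blast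
  then show ?thesis
    using assms(3) by (auto elim!: ultrafilter_on_nat_mono[OF ultrafilter])
qed

lemma is_stem_of_large_extensions:
  assumes "finite r" and "r \<in> A" and "\<forall>t\<in>A. comparable r t"
    and large: "{i. insert (a r i) r \<in> A} \<in> U"
  shows "is_stem A r"
proof -
  let ?W = "{i. insert (a r i) r \<in> A} \<inter> {i. \<forall>x\<in>r. x < a r i}"
  have W: "?W \<in> U"
    using ultrafilter_on_nat_Int[OF ultrafilter large eventually_above[OF assms(1)]] .
  then obtain i where i: "i \<in> ?W"
    using ultrafilter_on_nat_nonempty[OF ultrafilter] by blast
  have "{j. a r j \<noteq> a r i} \<in> U"
    using nonstandard[OF assms(1)] unfolding nonstandard_rep_def by blast
  then have "?W \<inter> {j. a r j \<noteq> a r i} \<noteq> {}"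
    using W ultrafilter_on_nat_Int[OF ultrafilter] ultrafilter_on_nat_nonempty[OF ultrafilter] by blast
  then obtain j where "j \<in> ?W" "a r j \<noteq> a r i"
    by blast
  then show ?thesis
    using is_stemI[of r A "a r i" "a r j"] assms(2,3) i by auto
qed

lemma alpha_treeI:
  assumes "is_tree A" and "r \<in> A" and "\<forall>t\<in>A. comparable r t"
    and large: "\<And>s. s \<in> A \<Longrightarrow> init_seg r s \<Longrightarrow> {i. insert (a s i) s \<in> A} \<in> U"
  shows "alpha_tree U a A" and "stem A = r"
proof -
  have "finite r"
    using assms(1,2) unfolding is_tree_def by blast
  then have "is_stem A r"
    using is_stem_of_large_extensions assms(2,3) large init_seg_refl by blast
  then show "stem A = r"
    by (rule stem_eqI)
  then show "alpha_tree U a A"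
    using assms \<open>is_stem A r\<close> \<open>finite r\<close> init_seg_refl
    unfolding alpha_tree_def tree_above_def by blast
qed

lemma alpha_tree_subtree_through:
  assumes A: "alpha_tree U a A" and t: "t \<in> tree_above A (stem A)"
  shows "alpha_tree U a (subtree_through A t)" and "stem (subtree_through A t) = t"
proof -
  have "is_tree A" and "t \<in> A" and "init_seg (stem A) t"
    using A t unfolding alpha_tree_def tree_above_def by auto
  then have "finite t"
    unfolding is_tree_def by blast
  have "{i. insert (a s i) s \<in> subtree_through A t} \<in> U"
    if "s \<in> subtree_through A t" and "init_seg t s" for s
  proof (rule eventually_extension_mono)
    have "s \<in> tree_above A (stem A)"
      using that \<open>init_seg (stem A) t\<close> init_seg_trans
      unfolding subtree_through_def tree_above_def by blast
    then show "{i. insert (a s i) s \<in> A} \<in> U"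
      using A unfolding alpha_tree_def by blast
    show "finite s"
      using that \<open>is_tree A\<close> unfolding subtree_through_def is_tree_def by blast
    then show "insert m s \<in> subtree_through A t" if "insert m s \<in> A" "\<forall>x\<in>s. x < m" for m
      using that \<open>init_seg t s\<close> init_seg_insert init_seg_trans
      unfolding subtree_through_def comparable_def by blast
  qed
  moreover have "t \<in> subtree_through A t" "\<forall>u\<in>subtree_through A t. comparable t u"
    using \<open>t \<in> A\<close> \<open>finite t\<close> init_seg_refl unfolding subtree_through_def comparable_def by auto
  ultimately show "alpha_tree U a (subtree_through A t)" "stem (subtree_through A t) = t"
    using alpha_treeI[OF is_tree_subtree_through[OF \<open>is_tree A\<close> \<open>t \<in> A\<close>]] by blast+
qed

lemma alpha_ramsey_null_prune:
  assumes "alpha_ramsey_null U a \<X>" and A: "alpha_tree U a A" and t: "t \<in> tree_above A (stem A)"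
  shows "\<exists>B. alpha_tree U a B \<and> B \<subseteq> A \<and> stem B = t \<and> branches B \<inter> \<X> = {}"
proof -
  obtain B where "alpha_tree U a B" "B \<subseteq> subtree_through A t" "branches B \<inter> \<X> = {}"
    "stem B = stem (subtree_through A t)"
    using alpha_ramsey_nullD[OF assms(1) alpha_tree_subtree_through(1)[OF A t]] by blast
  then show ?thesis
    using alpha_tree_subtree_through(2)[OF A t] unfolding subtree_through_def by blast
qed

end

locale alpha_fusion = alpha_sequence +
  fixes \<X> :: "nat \<Rightarrow> nat set set" and T :: "nat set set"
  assumes null: "\<And>n. alpha_ramsey_null U a (\<X> n)" and alpha_tree_T: "alpha_tree U a T"
begin

definition prune :: "nat \<Rightarrow> nat set set \<Rightarrow> nat set \<Rightarrow> nat set set" where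
  "prune n B t = (SOME B'. alpha_tree U a B' \<and> B' \<subseteq> B \<and> stem B' = t \<and> branches B' \<inter> \<X> n = {})"

lemma prune:
  assumes "alpha_tree U a B" and "t \<in> tree_above B (stem B)"
  shows "alpha_tree U a (prune n B t) \<and> prune n B t \<subseteq> B \<and> stem (prune n B t) = t
    \<and> branches (prune n B t) \<inter> \<X> n = {}"
  unfolding prune_def using someI_ex[OF alpha_ramsey_null_prune[OF null assms]] .

definition level :: "nat set \<Rightarrow> nat" where
  "level u = card u - card (stem T)"

text \<open>tree_at_level k u is meant for nodes u of level k; the parent of u is u - {Max u}.\<close>
primrec tree_at_level :: "nat \<Rightarrow> nat set \<Rightarrow> nat set set" where
  "tree_at_level 0 u = prune 0 T (stem T)"
| "tree_at_level (Suc k) u = prune (Suc k) (tree_at_level k (u - {Max u})) u"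

definition node_tree :: "nat set \<Rightarrow> nat set set" where
  "node_tree u = tree_at_level (level u) u"

inductive_set fusion_nodes :: "nat set set" where
  root: "stem T \<in> fusion_nodes"
| extend: "u \<in> fusion_nodes \<Longrightarrow> \<forall>x\<in>u. x < m \<Longrightarrow> insert m u \<in> node_tree u
    \<Longrightarrow> insert m u \<in> fusion_nodes"

lemma finite_stem_T: "finite (stem T)"
  using alpha_tree_T stem_in_tree_above[OF alpha_tree_T]
  unfolding alpha_tree_def is_tree_def tree_above_def by blast

lemma level_insert:
  assumes "finite u" and "init_seg (stem T) u" and "\<forall>x\<in>u. x < m"
  shows "level (insert m u) = Suc (level u)"
proof -
  have "m \<notin> u"
    using assms(3) by blast
  moreover have "card (stem T) \<le> card u"
    using card_mono[OF assms(1) init_seg_subset[OF assms(2)]] .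
  ultimately show ?thesis
    using assms(1) unfolding level_def by simp
qed

lemma node_tree_insert:
  assumes "finite u" and "init_seg (stem T) u" and "\<forall>x\<in>u. x < m"
    and "alpha_tree U a (node_tree u)" and "stem (node_tree u) = u" and "insert m u \<in> node_tree u"
  shows "alpha_tree U a (node_tree (insert m u)) \<and> node_tree (insert m u) \<subseteq> node_tree u
    \<and> stem (node_tree (insert m u)) = insert m u
    \<and> branches (node_tree (insert m u)) \<inter> \<X> (level (insert m u)) = {}"
proof -
  have "insert m u - {Max (insert m u)} = u"
    using assms(1,3) by (auto simp: Max_insert2 less_imp_le)
  then have "node_tree (insert m u) = prune (Suc (level u)) (node_tree u) (insert m u)"
    unfolding node_tree_def level_insert[OF assms(1-3)] by simp
  moreover have "insert m u \<in> tree_above (node_tree u) (stem (node_tree u))"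
    using assms init_seg_insert unfolding tree_above_def by auto
  ultimately show ?thesis
    using prune[OF assms(4)] level_insert[OF assms(1-3)] by simp
qed

lemma fusion_node_props:
  assumes "u \<in> fusion_nodes"
  shows "finite u \<and> init_seg (stem T) u \<and> alpha_tree U a (node_tree u) \<and> stem (node_tree u) = u
    \<and> node_tree u \<subseteq> T \<and> branches (node_tree u) \<inter> \<X> (level u) = {}"
  using assms
proof induction
  case root
  have "level (stem T) = 0" "node_tree (stem T) = prune 0 T (stem T)"
    unfolding level_def node_tree_def by simp_all
  then show ?case
    using prune[OF alpha_tree_T stem_in_tree_above[OF alpha_tree_T], of 0]
      finite_stem_T init_seg_refl by auto
next
  case (extend u m)
  then show ?case
    using node_tree_insert[of u m] init_seg_insert[of u m] init_seg_trans by auto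
qed

lemma fusion_nodeD:
  assumes "u \<in> fusion_nodes"
  shows "finite u" "init_seg (stem T) u" "alpha_tree U a (node_tree u)" "stem (node_tree u) = u"
    "node_tree u \<subseteq> T" "branches (node_tree u) \<inter> \<X> (level u) = {}"
  using fusion_node_props[OF assms] by auto

lemma node_in_node_tree: "u \<in> fusion_nodes \<Longrightarrow> u \<in> node_tree u"
  using stem_in_tree_above[OF fusion_nodeD(3)] fusion_nodeD(4) unfolding tree_above_def by simp

lemma node_tree_extend_subset:
  assumes "u \<in> fusion_nodes" and "\<forall>x\<in>u. x < m" and "insert m u \<in> node_tree u"
  shows "node_tree (insert m u) \<subseteq> node_tree u"
  using node_tree_insert[OF fusion_nodeD(1,2)[OF assms(1)] assms(2)
      fusion_nodeD(3,4)[OF assms(1)] assms(3)] by simp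

lemma node_tree_antimono:
  assumes "u \<in> fusion_nodes" and "v \<in> fusion_nodes" and "init_seg v u"
  shows "node_tree u \<subseteq> node_tree v"
  using assms
proof (induction arbitrary: v)
  case root
  then have "v = stem T"
    using fusion_nodeD(2) init_seg_antisym by blast
  then show ?case
    by simp
next
  case (extend u m)
  consider "v = insert m u" | "init_seg v u"
    using init_seg_insert_iff[OF fusion_nodeD(1)[OF extend.hyps(1)] extend.hyps(2)] extend.prems(2)
    by blast
  then show ?case
  proof cases
    case 2
    then show ?thesis
      using extend.IH[OF extend.prems(1)] node_tree_extend_subset[OF extend.hyps] by blast
  qed simp
qed

lemma fusion_nodes_down_closed:
  assumes "u \<in> fusion_nodes" and "init_seg (stem T) v" and "init_seg v u"
  shows "v \<in> fusion_nodes"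
  using assms
proof induction
  case root
  then show ?case
    using init_seg_antisym fusion_nodes.root by blast
next
  case (extend u m)
  consider "v = insert m u" | "init_seg v u"
    using init_seg_insert_iff[OF fusion_nodeD(1)[OF extend.hyps(1)] extend.hyps(2)] extend.prems(2)
    by blast
  then show ?case
  proof cases
    case 1
    then show ?thesis
      using fusion_nodes.extend[OF extend.hyps] by simp
  next
    case 2
    then show ?thesis
      using extend.IH extend.prems(1) by blast
  qed
qed

lemma fusion_nodes_large_extensions:
  assumes "u \<in> fusion_nodes"
  shows "{i. insert (a u i) u \<in> fusion_nodes} \<in> U"
proof (rule eventually_extension_mono)
  show "finite u"
    using fusion_nodeD(1)[OF assms] .
  have "u \<in> tree_above (node_tree u) (stem (node_tree u))"
    using stem_in_tree_above[OF fusion_nodeD(3)[OF assms]] fusion_nodeD(4)[OF assms] by simp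
  then show "{i. insert (a u i) u \<in> node_tree u} \<in> U"
    using fusion_nodeD(3,4)[OF assms] unfolding alpha_tree_def by simp
qed (rule fusion_nodes.extend[OF assms])

definition fusion_tree :: "nat set set" where
  "fusion_tree = {u. init_seg u (stem T)} \<union> fusion_nodes"

lemma fusion_tree_above_stem: "u \<in> fusion_tree \<Longrightarrow> init_seg (stem T) u \<Longrightarrow> u \<in> fusion_nodes"
  unfolding fusion_tree_def using init_seg_antisym fusion_nodes.root by blast

lemma comparable_stem_fusion_tree: "t \<in> fusion_tree \<Longrightarrow> comparable (stem T) t"
  unfolding fusion_tree_def comparable_def using fusion_nodeD(2) by blast

lemma fusion_tree_subset: "fusion_tree \<subseteq> T"
proof
  fix u assume u: "u \<in> fusion_tree"
  have "is_tree T" and "stem T \<in> T"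
    using stem_in_tree_above[OF alpha_tree_T] alpha_tree_T
    unfolding alpha_tree_def tree_above_def by auto
  show "u \<in> T"
  proof (cases "u \<in> fusion_nodes")
    case True
    then show ?thesis
      using node_in_node_tree fusion_nodeD(5) by blast
  next
    case False
    then have "init_seg u (stem T)"
      using u unfolding fusion_tree_def by blast
    then show ?thesis
      using is_tree_closed[OF \<open>is_tree T\<close> \<open>stem T \<in> T\<close>] by blast
  qed
qed

lemma is_tree_fusion_tree: "is_tree fusion_tree"
  unfolding is_tree_def
proof (intro conjI ballI allI impI)
  show "fusion_tree \<noteq> {}"
    unfolding fusion_tree_def using fusion_nodes.root by blast
  show "finite t" if "t \<in> fusion_tree" for t
    using that init_seg_finite fusion_nodeD(1) unfolding fusion_tree_def by blast
  fix t s assume t: "t \<in> fusion_tree" and "init_seg s t"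
  consider "init_seg t (stem T)" | "init_seg (stem T) t"
    using comparable_stem_fusion_tree[OF t] unfolding comparable_def by blast
  then show "s \<in> fusion_tree"
  proof cases
    case 1
    then show ?thesis
      using init_seg_trans[OF \<open>init_seg s t\<close>] unfolding fusion_tree_def by blast
  next
    case 2
    then have "comparable s (stem T)"
      using init_seg_comparable[OF \<open>init_seg s t\<close>] by blast
    then show ?thesis
      using fusion_nodes_down_closed[OF fusion_tree_above_stem[OF t 2] _ \<open>init_seg s t\<close>]
      unfolding comparable_def fusion_tree_def by blast
  qed
qed

lemma alpha_tree_fusion_tree:
  shows "alpha_tree U a fusion_tree" and "stem fusion_tree = stem T"
proof -
  have "stem T \<in> fusion_tree"
    unfolding fusion_tree_def using fusion_nodes.root by blast
  moreover have "{i. insert (a s i) s \<in> fusion_tree} \<in> U"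
    if "s \<in> fusion_tree" and "init_seg (stem T) s" for s
  proof (rule ultrafilter_on_nat_mono[OF ultrafilter])
    show "{i. insert (a s i) s \<in> fusion_nodes} \<in> U"
      using fusion_nodes_large_extensions[OF fusion_tree_above_stem[OF that]] .
  qed (auto simp: fusion_tree_def)
  ultimately show "alpha_tree U a fusion_tree" "stem fusion_tree = stem T"
    using alpha_treeI[OF is_tree_fusion_tree _ ballI[OF comparable_stem_fusion_tree]] by blast+
qed

lemma branches_fusion_tree: "branches fusion_tree \<inter> \<X> n = {}"
proof (intro equals0I)
  fix X assume X: "X \<in> branches fusion_tree \<inter> \<X> n"
  then have "infinite X" and segs: "\<And>s. init_seg s X \<Longrightarrow> s \<in> fusion_tree"
    unfolding branches_def by auto
  obtain u where uX: "init_seg u X" and card_u: "card u = card (stem T) + n"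
    using ex_init_seg_card[OF \<open>infinite X\<close>] by blast
  have "init_seg (stem T) u"
  proof (cases "init_seg u (stem T)")
    case True
    then have "u = stem T"
      using card_seteq[OF finite_stem_T init_seg_subset[OF True]] card_u by simp
    then show ?thesis
      using init_seg_refl[OF finite_stem_T] by simp
  qed (use comparable_stem_fusion_tree[OF segs[OF uX]] comparable_def in blast)
  then have u: "u \<in> fusion_nodes"
    using fusion_tree_above_stem segs uX by blast
  have "X \<in> branches (node_tree u)"
    unfolding branches_def
  proof (intro CollectI conjI allI impI \<open>infinite X\<close>)
    fix s assume "init_seg s X"
    then consider "init_seg s u" | "init_seg u s"
      using init_seg_comparable[OF _ uX] unfolding comparable_def by blast
    then show "s \<in> node_tree u"
    proof cases
      case 1
      then show ?thesis
        using is_tree_closed[OF alpha_tree_is_tree[OF fusion_nodeD(3)[OF u]] node_in_node_tree[OF u]]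
        by blast
    next
      case 2
      then have "s \<in> fusion_nodes"
        using fusion_tree_above_stem[OF segs[OF \<open>init_seg s X\<close>]]
          init_seg_trans[OF \<open>init_seg (stem T) u\<close>] by blast
      then show ?thesis
        using node_tree_antimono[OF _ u 2] node_in_node_tree by blast
    qed
  qed
  moreover have "level u = n"
    using card_u unfolding level_def by simp
  ultimately show False
    using fusion_nodeD(6)[OF u] X by blast
qed

end

context alpha_sequence
begin

lemma alpha_ramsey_null_UN:
  fixes \<X> :: "nat \<Rightarrow> nat set set"
  assumes null: "\<And>n. alpha_ramsey_null U a (\<X> n)"
  shows "alpha_ramsey_null U a (\<Union>n. \<X> n)"
  unfolding alpha_ramsey_null_def
proof (intro conjI ballI allI impI)
  fix X assume "X \<in> (\<Union>n. \<X> n)"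
  then obtain n where "X \<in> \<X> n"
    by blast
  then show "infinite X"
    using null[of n] unfolding alpha_ramsey_null_def by simp
next
  fix T assume "alpha_tree U a T"
  then interpret alpha_fusion U a \<X> T
    using null by unfold_locales
  show "\<exists>S. alpha_tree U a S \<and> S \<subseteq> T \<and> stem S = stem T \<and> branches S \<inter> (\<Union>n. \<X> n) = {}"
    using alpha_tree_fusion_tree fusion_tree_subset branches_fusion_tree by blast
qed

end

theorem mainTheorem15:
  fixes U :: "nat set set" and a :: "nat set \<Rightarrow> nat \<Rightarrow> nat"
  assumes "ultrafilter_on_nat U" and "nonprincipal U"
    and "\<And>s. finite s \<Longrightarrow> nonstandard_rep U (a s)"
  shows "alpha_ramsey_null U a {}
    \<and> (\<forall>\<X> \<Y>. alpha_ramsey_null U a \<X> \<longrightarrow> \<Y> \<subseteq> \<X> \<longrightarrow> alpha_ramsey_null U a \<Y>)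
    \<and> (\<forall>\<X> :: nat \<Rightarrow> nat set set. (\<forall>n. alpha_ramsey_null U a (\<X> n))
          \<longrightarrow> alpha_ramsey_null U a (\<Union>n. \<X> n))"
proof -
  interpret alpha_sequence U a
    using assms(1,3) by unfold_locales
  have "alpha_ramsey_null U a {}"
    unfolding alpha_ramsey_null_def by blast
  then show ?thesis
    using alpha_ramsey_null_subset alpha_ramsey_null_UN by blast
qed

end
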